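(* Let $\mathbb{T}$ be a time scale, $t_0\in\mathbb{T}$, $b,c:\mathbb{T}\to[0,\infty)$, $x_0>0$, $y_0>0$, $z_0\ge0$, and let $(x,y,z)$ be a solution of $$x^{\Delta}=-\frac{b(t)\,x\,y^{\sigma}}{x+y},\qquad y^{\Delta}=\frac{b(t)\,x\,y^{\sigma}}{x+y}-c(t)\,y^{\sigma},\qquad z^{\Delta}=c(t)\,y^{\sigma},$$ with $x,y:\mathbb{T}\to(0,\infty)$, $z:\mathbb{T}\to[0,\infty)$, $x(t_0)=x_0$, $y(t_0)=y_0$, $z(t_0)=z_0$. If $c(t)\ge b(t)$ for all $t\in\mathbb{T}$, or $\frac{x_0}{x_0+y_0}b(t)\le c(t)\le b(t)$ for all $t\in\mathbb{T}$, then $y$ is decreasing, i.e. $y^{\Delta}(t)\le0$ for all $t$. If $\frac{x_0}{x_0+y_0}b(t_0)\ge c(t_0)$, then $y^{\Delta}(t_0)\ge0$.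
   Context: A time scale $\mathbb{T}$ is a nonempty closed subset of $\mathbb{R}$. $\sigma(t)=\inf\{s\in\mathbb{T}:s>t\}$, $f^{\sigma}=f\circ\sigma$. $f^{\Delta}$ is the delta (Hilger) derivative: for every $\varepsilon>0$ there is $\delta>0$ with $|f(\sigma(t))-f(s)-f^{\Delta}(t)(\sigma(t)-s)|\le\varepsilon|\sigma(t)-s|$ for $s\in(t-\delta,t+\delta)\cap\mathbb{T}$. *)

theory Defs
  imports "HOL-Analysis.Analysis"
begin

definition time_scale :: "real set \<Rightarrow> bool" where
  "time_scale T \<longleftrightarrow> T \<noteq> {} \<and> closed T"

text \<open>Forward jump operator; convention inf of the empty set = sup T, i.e. sigma (max T) = max T.\<close>
definition ts_sigma :: "real set \<Rightarrow> real \<Rightarrow> real" where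
  "ts_sigma T t = (if \<exists>s\<in>T. s > t then Inf {s\<in>T. s > t} else t)"

definition has_delta_derivative :: "real set \<Rightarrow> (real \<Rightarrow> real) \<Rightarrow> real \<Rightarrow> real \<Rightarrow> bool" where
  "has_delta_derivative T f D t \<longleftrightarrow>
     (\<forall>\<epsilon>>0. \<exists>\<delta>>0. \<forall>s\<in>T. \<bar>s - t\<bar> < \<delta> \<longrightarrow>
        \<bar>f (ts_sigma T t) - f s - D * (ts_sigma T t - s)\<bar> \<le> \<epsilon> * \<bar>ts_sigma T t - s\<bar>)"

end

theory Submission
  imports Defs
begin

text \<open>
  Writing \<open>y\<^sup>\<Delta> = y\<^sup>\<sigma> (b x/(x+y) - c)\<close> with \<open>y\<^sup>\<sigma> > 0\<close>, the sign of \<open>y\<^sup>\<Delta>\<close> is that of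
  \<open>b x/(x+y) - c\<close>. If \<open>c \<ge> b\<close> this is nonpositive because \<open>x/(x+y) \<le> 1\<close>. If \<open>c \<le> b\<close>, the
  cross term \<open>x\<^sup>\<Delta> y - x y\<^sup>\<Delta> = x y\<^sup>\<sigma> (c - b)\<close> is nonpositive, so the ratio \<open>x/y\<close>, and with it
  the susceptible share \<open>x/(x+y)\<close>, never exceeds its initial value; the lower bound on \<open>c\<close>
  then gives the sign. That \<open>x/y\<close> is nonincreasing is checked separately at right-scattered
  points (one exact jump \<open>f\<^sup>\<sigma> = f + \<mu> f\<^sup>\<Delta>\<close>) and right-dense points (an ordinary
  one-sided derivative), and glued together by the induction principle for time scales.
\<close>

lemma ts_sigma_ge: "t \<le> ts_sigma T t"
  unfolding ts_sigma_def by (auto intro: cInf_greatest)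

lemma ts_sigma_le:
  assumes "s \<in> T" "t < s"
  shows "ts_sigma T t \<le> s"
  using assms unfolding ts_sigma_def by (auto intro!: cInf_lower bdd_belowI[of _ t])

lemma ts_sigma_in:
  assumes "closed T" "t \<in> T"
  shows "ts_sigma T t \<in> T"
proof (cases "\<exists>s\<in>T. t < s")
  case True
  then have "Inf {s\<in>T. t < s} \<in> closure {s\<in>T. t < s}"
    by (intro closure_contains_Inf) (auto intro: bdd_belowI[of _ t])
  also have "\<dots> \<subseteq> T"
    using assms(1) by (simp add: closure_minimal)
  finally show ?thesis
    using True by (simp add: ts_sigma_def)
qed (simp add: ts_sigma_def assms)

lemma ts_right_dense_approx:
  assumes "ts_sigma T t = t" "s \<in> T" "t < s" "e > 0"
  shows "\<exists>r\<in>T. t < r \<and> r < t + e"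
proof -
  have "Inf {s\<in>T. t < s} < t + e"
    using assms by (auto simp: ts_sigma_def split: if_splits)
  then show ?thesis
    using assms(2,3) by (subst (asm) cInf_less_iff) (auto intro: bdd_belowI[of _ t])
qed

lemma has_delta_derivative_sigma:
  assumes "has_delta_derivative T f D t" "t \<in> T"
  shows "f (ts_sigma T t) = f t + (ts_sigma T t - t) * D"
proof -
  define \<mu> where "\<mu> = \<bar>ts_sigma T t - t\<bar>"
  define E where "E = \<bar>f (ts_sigma T t) - f t - D * (ts_sigma T t - t)\<bar>"
  have "E \<le> 0 + e" if "e > 0" for e
  proof -
    have "E \<le> e / (\<mu> + 1) * \<mu>"
      using assms \<open>e > 0\<close> unfolding has_delta_derivative_def E_def \<mu>_def
      by (metis abs_ge_zero add_nonneg_pos diff_self divide_pos_pos zero_less_one abs_zero)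
    also have "\<dots> \<le> e"
      using \<open>e > 0\<close> by (simp add: \<mu>_def field_simps)
    finally show ?thesis by simp
  qed
  then have "E \<le> 0"
    by (rule field_le_epsilon)
  then show ?thesis
    by (simp add: E_def algebra_simps)
qed

lemma has_delta_derivative_imp_continuous:
  assumes "has_delta_derivative T f D t" "t \<in> T"
  shows "continuous (at t within T) f"
proof -
  define \<sigma> where "\<sigma> = ts_sigma T t"
  define g where "g s = f \<sigma> - f s - D * (\<sigma> - s)" for s
  have "(g \<longlongrightarrow> 0) (at t within T)"
  proof (rule tendstoI)
    fix e :: real
    assume "e > 0"
    define \<epsilon> where "\<epsilon> = e / (\<bar>\<sigma> - t\<bar> + 2)"
    have "\<epsilon> > 0"
      using \<open>e > 0\<close> by (simp add: \<epsilon>_def)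
    then obtain d where "d > 0" and d: "\<forall>s\<in>T. \<bar>s - t\<bar> < d \<longrightarrow> \<bar>g s\<bar> \<le> \<epsilon> * \<bar>\<sigma> - s\<bar>"
      using assms(1) unfolding has_delta_derivative_def g_def \<sigma>_def by blast
    have "\<bar>g s\<bar> < e" if "s \<in> T" "\<bar>s - t\<bar> < min d 1" for s
    proof -
      have "\<bar>g s\<bar> \<le> \<epsilon> * \<bar>\<sigma> - s\<bar>"
        using d that by simp
      also have "\<dots> \<le> \<epsilon> * (\<bar>\<sigma> - t\<bar> + 1)"
        using \<open>\<epsilon> > 0\<close> that by (intro mult_left_mono) auto
      also have "\<dots> < e"
        using \<open>e > 0\<close> by (simp add: \<epsilon>_def field_simps)
      finally show ?thesis .
    qed
    then show "\<forall>\<^sub>F s in at t within T. dist (g s) 0 < e"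
      using \<open>d > 0\<close> unfolding eventually_at dist_real_def
      by (metis min_less_iff_conj zero_less_one diff_0_right)
  qed
  then have "((\<lambda>s. f \<sigma> - D * (\<sigma> - s) - g s) \<longlongrightarrow> f \<sigma> - D * (\<sigma> - t) - 0) (at t within T)"
    by (intro tendsto_intros)
  moreover have "f \<sigma> - D * (\<sigma> - t) = f t"
    using has_delta_derivative_sigma[OF assms] by (simp add: \<sigma>_def algebra_simps)
  ultimately show ?thesis
    unfolding continuous_within by (simp add: g_def)
qed

lemma has_delta_derivative_right_dense:
  assumes "has_delta_derivative T f D t" "ts_sigma T t = t"
  shows "(f has_real_derivative D) (at t within T)"
  unfolding has_field_derivative_def has_derivative_within_alt
proof (intro conjI allI impI)
  show "bounded_linear ((*) D)"
    by (rule bounded_linear_mult_right)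
  fix e :: real
  assume "e > 0"
  then obtain d where "d > 0" and d: "\<forall>s\<in>T. \<bar>s - t\<bar> < d \<longrightarrow> \<bar>f t - f s - D * (t - s)\<bar> \<le> e * \<bar>t - s\<bar>"
    using assms unfolding has_delta_derivative_def by metis
  then show "\<exists>d>0. \<forall>s\<in>T. norm (s - t) < d \<longrightarrow> norm (f s - f t - D * (s - t)) \<le> e * norm (s - t)"
    by (auto simp: abs_minus_commute algebra_simps)
qed

lemma time_scale_extend_right:
  fixes P :: "real \<Rightarrow> bool"
  assumes "closed T" and "m \<in> T" and "P m" and "t1 \<in> T" and "m < t1"
    and right_scattered: "\<And>t. t \<in> T \<Longrightarrow> t < ts_sigma T t \<Longrightarrow> P t \<Longrightarrow> P (ts_sigma T t)"
    and right_dense: "\<And>t. t \<in> T \<Longrightarrow> ts_sigma T t = t \<Longrightarrow> P t \<Longrightarrow>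
        \<exists>d>0. \<forall>s\<in>T. t < s \<and> s < t + d \<longrightarrow> P s"
  obtains s where "s \<in> T" "m < s" "s \<le> t1" "\<forall>r\<in>T. m < r \<and> r \<le> s \<longrightarrow> P r"
proof -
  consider "m < ts_sigma T m" | "ts_sigma T m = m"
    using ts_sigma_ge[of m T] by linarith
  then show ?thesis
  proof cases
    case 1
    have "P r" if "r \<in> T" "m < r" "r \<le> ts_sigma T m" for r
    proof -
      have "r = ts_sigma T m"
        using ts_sigma_le[OF that(1,2)] that(3) by simp
      then show ?thesis
        using right_scattered[OF \<open>m \<in> T\<close> 1 \<open>P m\<close>] by simp
    qed
    then show ?thesis
      using that[OF ts_sigma_in[OF \<open>closed T\<close> \<open>m \<in> T\<close>] 1] ts_sigma_le[OF \<open>t1 \<in> T\<close> \<open>m < t1\<close>]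
      by blast
  next
    case 2
    obtain d where "d > 0" and d: "\<forall>s\<in>T. m < s \<and> s < m + d \<longrightarrow> P s"
      using right_dense[OF \<open>m \<in> T\<close> 2 \<open>P m\<close>] by blast
    obtain s where "s \<in> T" "m < s" "s < m + min d (t1 - m)"
      using ts_right_dense_approx[OF 2 \<open>t1 \<in> T\<close> \<open>m < t1\<close>, of "min d (t1 - m)"] \<open>d > 0\<close> \<open>m < t1\<close>
      by auto
    moreover have "\<forall>r\<in>T. m < r \<and> r \<le> s \<longrightarrow> P r"
      using d \<open>s < m + min d (t1 - m)\<close> by auto
    ultimately show ?thesis
      using that[of s] by linarith
  qed
qed

lemma time_scale_induct:
  fixes P :: "real \<Rightarrow> bool"
  assumes "closed T" and "t0 \<in> T" and "\<forall>t\<in>T. t0 \<le> t"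
    and closed_P: "closed {t\<in>T. P t}"
    and base: "P t0"
    and right_scattered: "\<And>t. t \<in> T \<Longrightarrow> t < ts_sigma T t \<Longrightarrow> P t \<Longrightarrow> P (ts_sigma T t)"
    and right_dense: "\<And>t. t \<in> T \<Longrightarrow> ts_sigma T t = t \<Longrightarrow> P t \<Longrightarrow>
        \<exists>d>0. \<forall>s\<in>T. t < s \<and> s < t + d \<longrightarrow> P s"
    and "t1 \<in> T"
  shows "P t1"
proof -
  define S where "S = {s\<in>T. s \<le> t1 \<and> (\<forall>r\<in>T. r \<le> s \<longrightarrow> P r)}"
  define m where "m = Sup S"
  have "t0 \<in> S"
  proof -
    have "P r" if "r \<in> T" "r \<le> t0" for r
      using that assms(3) base by (metis order_antisym)
    then show ?thesis
      using assms(2,3,8) by (simp add: S_def)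
  qed
  then have "S \<noteq> {}" by auto
  have "bdd_above S"
    by (auto simp: S_def intro: bdd_aboveI[of _ t1])
  have "m \<le> t1"
    unfolding m_def using \<open>S \<noteq> {}\<close> by (rule cSup_least) (simp add: S_def)
  have "m \<in> closure S"
    unfolding m_def using \<open>S \<noteq> {}\<close> \<open>bdd_above S\<close> by (rule closure_contains_Sup)
  also have "closure S \<subseteq> {t\<in>T. P t}"
    using closed_P by (intro closure_minimal) (auto simp: S_def)
  finally have "m \<in> T" "P m" by auto
  have below_m: "P r" if r: "r \<in> T" "r \<le> m" for r
  proof (cases "r = m")
    case False
    then obtain s where "s \<in> S" "r < s"
      using r less_cSupE[OF _ \<open>S \<noteq> {}\<close>, of r] unfolding m_def by auto
    then show ?thesis
      using r unfolding S_def by auto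
  qed (use \<open>P m\<close> in simp)
  have "\<not> m < t1"
  proof
    assume "m < t1"
    then obtain s where "s \<in> T" "m < s" "s \<le> t1" "\<forall>r\<in>T. m < r \<and> r \<le> s \<longrightarrow> P r"
      using time_scale_extend_right[where P = P, OF \<open>closed T\<close> \<open>m \<in> T\<close> \<open>P m\<close> \<open>t1 \<in> T\<close>] right_scattered right_dense
      by blast
    then have "s \<in> S"
      using below_m unfolding S_def by (auto simp: not_le[symmetric])
    then show False
      using cSup_upper[OF _ \<open>bdd_above S\<close>] \<open>m < s\<close> unfolding m_def by fastforce
  qed
  then show ?thesis
    using \<open>m \<le> t1\<close> \<open>P m\<close> by (metis antisym not_le)
qed

lemma time_scale_nonincreasing:
  fixes f :: "real \<Rightarrow> real"
  assumes "closed T" and "t0 \<in> T" and "\<forall>t\<in>T. t0 \<le> t"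
    and "continuous_on T f"
    and right_scattered: "\<And>t. t \<in> T \<Longrightarrow> t < ts_sigma T t \<Longrightarrow> f (ts_sigma T t) \<le> f t"
    and right_dense: "\<And>t. t \<in> T \<Longrightarrow> ts_sigma T t = t \<Longrightarrow>
        \<exists>D\<le>0. (f has_real_derivative D) (at t within T)"
    and "t \<in> T"
  shows "f t \<le> f t0"
proof -
  \<comment> \<open>The slack \<open>\<epsilon>\<close> is what lets a derivative that is merely \<open>\<le> 0\<close> push the bound to the right.\<close>
  have slack: "f t \<le> f t0 + \<epsilon> * (t - t0)" if "\<epsilon> > 0" for \<epsilon>
  proof (rule time_scale_induct[OF assms(1-3), where P = "\<lambda>r. f r \<le> f t0 + \<epsilon> * (r - t0)"])
    show "closed {r \<in> T. f r \<le> f t0 + \<epsilon> * (r - t0)}"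
      using \<open>continuous_on T f\<close> \<open>closed T\<close>
      by (intro continuous_on_closed_Collect_le continuous_intros)
  next
    fix r
    assume "r \<in> T" "r < ts_sigma T r" "f r \<le> f t0 + \<epsilon> * (r - t0)"
    moreover have "\<epsilon> * (r - t0) \<le> \<epsilon> * (ts_sigma T r - t0)"
      using \<open>\<epsilon> > 0\<close> \<open>r < ts_sigma T r\<close> by simp
    ultimately show "f (ts_sigma T r) \<le> f t0 + \<epsilon> * (ts_sigma T r - t0)"
      using right_scattered[of r] by linarith
  next
    fix r
    assume "r \<in> T" "ts_sigma T r = r" and r: "f r \<le> f t0 + \<epsilon> * (r - t0)"
    then obtain D where "D \<le> 0" and "(f has_real_derivative D) (at r within T)"
      using right_dense by blast
    then obtain d where "d > 0"
      and d: "\<forall>s\<in>T. \<bar>s - r\<bar> < d \<longrightarrow> \<bar>f s - f r - D * (s - r)\<bar> \<le> \<epsilon> * \<bar>s - r\<bar>"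
      using \<open>\<epsilon> > 0\<close> unfolding has_field_derivative_def has_derivative_within_alt by fastforce
    have "f s \<le> f t0 + \<epsilon> * (s - t0)" if "s \<in> T" "r < s" "s < r + d" for s
    proof -
      have "f s \<le> f r + D * (s - r) + \<epsilon> * (s - r)"
        using d that by fastforce
      moreover have "D * (s - r) \<le> 0"
        using \<open>D \<le> 0\<close> \<open>r < s\<close> by (simp add: mult_nonpos_nonneg)
      ultimately show ?thesis
        using r by (simp add: algebra_simps)
    qed
    then show "\<exists>d>0. \<forall>s\<in>T. r < s \<and> s < r + d \<longrightarrow> f s \<le> f t0 + \<epsilon> * (s - t0)"
      using \<open>d > 0\<close> by blast
  qed (use \<open>t \<in> T\<close> in auto)
  have "((\<lambda>\<epsilon>. f t0 + \<epsilon> * (t - t0)) \<longlongrightarrow> f t0 + 0 * (t - t0)) (at_right 0)"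
    by (intro tendsto_intros)
  then have "((\<lambda>\<epsilon>. f t0 + \<epsilon> * (t - t0)) \<longlongrightarrow> f t0) (at_right 0)"
    by simp
  then show ?thesis
    by (rule tendsto_lowerbound) (auto simp: eventually_at_right_field intro: slack exI[of _ 1])
qed

lemma delta_quotient_nonincreasing:
  fixes f g fD gD :: "real \<Rightarrow> real"
  assumes "closed T" and "t0 \<in> T" and "\<forall>t\<in>T. t0 \<le> t"
    and f: "\<And>t. t \<in> T \<Longrightarrow> has_delta_derivative T f (fD t) t"
    and g: "\<And>t. t \<in> T \<Longrightarrow> has_delta_derivative T g (gD t) t"
    and g_pos: "\<And>t. t \<in> T \<Longrightarrow> g t > 0"
    and nonpos: "\<And>t. t \<in> T \<Longrightarrow> fD t * g t - f t * gD t \<le> 0"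
    and "t \<in> T"
  shows "f t / g t \<le> f t0 / g t0"
proof (rule time_scale_nonincreasing[OF assms(1-3), where f = "\<lambda>t. f t / g t"])
  have "continuous_on T f" "continuous_on T g"
    using has_delta_derivative_imp_continuous[OF f] has_delta_derivative_imp_continuous[OF g]
    by (auto simp: continuous_on_eq_continuous_within)
  then show "continuous_on T (\<lambda>t. f t / g t)"
    by (intro continuous_on_divide) (auto dest!: g_pos)
next
  fix r
  assume "r \<in> T" "r < ts_sigma T r"
  define \<sigma> where "\<sigma> = ts_sigma T r"
  have f_step: "f \<sigma> = f r + (\<sigma> - r) * fD r" and g_step: "g \<sigma> = g r + (\<sigma> - r) * gD r"
    using has_delta_derivative_sigma[OF f[OF \<open>r \<in> T\<close>] \<open>r \<in> T\<close>]
      has_delta_derivative_sigma[OF g[OF \<open>r \<in> T\<close>] \<open>r \<in> T\<close>]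
    by (simp_all add: \<sigma>_def)
  have "f \<sigma> * g r - f r * g \<sigma> = (\<sigma> - r) * (fD r * g r - f r * gD r)"
    unfolding f_step g_step by (simp add: algebra_simps)
  also have "\<dots> \<le> 0"
    using nonpos[OF \<open>r \<in> T\<close>] \<open>r < ts_sigma T r\<close> by (simp add: \<sigma>_def mult_nonneg_nonpos)
  finally show "f (ts_sigma T r) / g (ts_sigma T r) \<le> f r / g r"
    using g_pos[OF \<open>r \<in> T\<close>] g_pos[OF ts_sigma_in[OF \<open>closed T\<close> \<open>r \<in> T\<close>]]
    by (simp add: \<sigma>_def divide_simps)
next
  fix r
  assume "r \<in> T" "ts_sigma T r = r"
  moreover have "g r \<noteq> 0"
    using g_pos[OF \<open>r \<in> T\<close>] by simp
  ultimately have "((\<lambda>t. f t / g t) has_real_derivative (fD r * g r - f r * gD r) / (g r * g r)) (at r within T)"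
    using DERIV_divide[OF has_delta_derivative_right_dense[OF f] has_delta_derivative_right_dense[OF g]]
    by simp
  moreover have "(fD r * g r - f r * gD r) / (g r * g r) \<le> 0"
    using nonpos[OF \<open>r \<in> T\<close>] g_pos[OF \<open>r \<in> T\<close>] by (simp add: divide_nonpos_pos)
  ultimately show "\<exists>D\<le>0. ((\<lambda>t. f t / g t) has_real_derivative D) (at r within T)"
    by blast
qed (use \<open>t \<in> T\<close> in auto)

lemma ratio_le_imp_share_le:
  fixes x y x' y' :: real
  assumes "x > 0" "y > 0" "x' > 0" "y' > 0" "x / y \<le> x' / y'"
  shows "x / (x + y) \<le> x' / (x' + y')"
  using assms by (simp add: divide_simps algebra_simps)

lemma sir_cross_term:
  fixes b c X Y Y' xD yD :: real
  assumes "X + Y \<noteq> 0"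
    and "xD = - (b * X * Y') / (X + Y)" and "yD = b * X * Y' / (X + Y) - c * Y'"
  shows "xD * Y - X * yD = X * Y' * (c - b)"
  using assms(1) unfolding assms(2,3) by (simp add: divide_simps) (simp add: algebra_simps)

lemma sir_infected_sign:
  fixes b c X Y Y' yD :: real
  assumes "yD = b * X * Y' / (X + Y) - c * Y'" and "Y' > 0"
  shows "yD \<le> 0 \<longleftrightarrow> b * (X / (X + Y)) \<le> c" and "yD \<ge> 0 \<longleftrightarrow> c \<le> b * (X / (X + Y))"
proof -
  have "yD = Y' * (b * (X / (X + Y)) - c)"
    using assms(1) by (simp add: algebra_simps)
  then show "yD \<le> 0 \<longleftrightarrow> b * (X / (X + Y)) \<le> c" and "yD \<ge> 0 \<longleftrightarrow> c \<le> b * (X / (X + Y))"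
    using \<open>Y' > 0\<close> by (simp_all add: mult_le_0_iff zero_le_mult_iff)
qed

lemma sir_susceptible_share_nonincreasing:
  fixes T :: "real set" and b c x y xD yD :: "real \<Rightarrow> real"
  assumes "closed T" and "t0 \<in> T" and "\<forall>t\<in>T. t0 \<le> t"
    and x_pos: "\<forall>t\<in>T. x t > 0" and y_pos: "\<forall>t\<in>T. y t > 0"
    and dx: "\<forall>t\<in>T. has_delta_derivative T x (xD t) t"
    and dy: "\<forall>t\<in>T. has_delta_derivative T y (yD t) t"
    and eqx: "\<forall>t\<in>T. xD t = - (b t * x t * y (ts_sigma T t)) / (x t + y t)"
    and eqy: "\<forall>t\<in>T. yD t = b t * x t * y (ts_sigma T t) / (x t + y t) - c t * y (ts_sigma T t)"
    and c_le_b: "\<forall>t\<in>T. c t \<le> b t"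
    and "t \<in> T"
  shows "x t / (x t + y t) \<le> x t0 / (x t0 + y t0)"
proof -
  have cross_nonpos: "xD r * y r - x r * yD r \<le> 0" if "r \<in> T" for r
  proof -
    have "x r > 0" "y r > 0" "y (ts_sigma T r) > 0"
      using that x_pos y_pos ts_sigma_in[OF \<open>closed T\<close> that] by auto
    then have "xD r * y r - x r * yD r = x r * y (ts_sigma T r) * (c r - b r)"
      using that eqx eqy by (intro sir_cross_term) auto
    also have "\<dots> \<le> 0"
      using \<open>x r > 0\<close> \<open>y (ts_sigma T r) > 0\<close> c_le_b that by (simp add: mult_nonneg_nonpos)
    finally show ?thesis .
  qed
  have "x t / y t \<le> x t0 / y t0"
    by (rule delta_quotient_nonincreasing[OF assms(1-3)]) (use dx dy y_pos cross_nonpos \<open>t \<in> T\<close> in auto)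
  then show ?thesis
    using ratio_le_imp_share_le x_pos y_pos \<open>t \<in> T\<close> \<open>t0 \<in> T\<close> by simp
qed

theorem theorem28:
  fixes T :: "real set" and t0 x0 y0 z0 :: real
    and b c x y z xD yD zD :: "real \<Rightarrow> real"
  defines "T0 \<equiv> {t \<in> T. t0 \<le> t}"
  assumes ts: "time_scale T" and t0: "t0 \<in> T"
    and b_nonneg: "\<forall>t\<in>T. b t \<ge> 0" and c_nonneg: "\<forall>t\<in>T. c t \<ge> 0"
    and x0: "x0 > 0" and y0: "y0 > 0" and z0: "z0 \<ge> 0"
    and x_pos: "\<forall>t\<in>T0. x t > 0" and y_pos: "\<forall>t\<in>T0. y t > 0" and z_nonneg: "\<forall>t\<in>T0. z t \<ge> 0"
    and init: "x t0 = x0" "y t0 = y0" "z t0 = z0"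
    and dx: "\<forall>t\<in>T0. has_delta_derivative T0 x (xD t) t"
    and dy: "\<forall>t\<in>T0. has_delta_derivative T0 y (yD t) t"
    and dz: "\<forall>t\<in>T0. has_delta_derivative T0 z (zD t) t"
    and eqx: "\<forall>t\<in>T0. xD t = - (b t * x t * y (ts_sigma T0 t)) / (x t + y t)"
    and eqy: "\<forall>t\<in>T0. yD t = b t * x t * y (ts_sigma T0 t) / (x t + y t) - c t * y (ts_sigma T0 t)"
    and eqz: "\<forall>t\<in>T0. zD t = c t * y (ts_sigma T0 t)"
  shows "(((\<forall>t\<in>T. c t \<ge> b t) \<or>
          (\<forall>t\<in>T. x0 / (x0 + y0) * b t \<le> c t \<and> c t \<le> b t))
           \<longrightarrow> (\<forall>t\<in>T0. yD t \<le> 0)) \<and>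
         (x0 / (x0 + y0) * b t0 \<ge> c t0 \<longrightarrow> yD t0 \<ge> 0)"
proof -
  have T0: "closed T0" "t0 \<in> T0" "\<forall>t\<in>T0. t0 \<le> t" and "T0 \<subseteq> T"
    using ts t0 closed_Int[of T "{t0..}"] by (auto simp: time_scale_def T0_def Int_def)
  have yD_sign: "yD t \<le> 0 \<longleftrightarrow> b t * (x t / (x t + y t)) \<le> c t"
    "yD t \<ge> 0 \<longleftrightarrow> c t \<le> b t * (x t / (x t + y t))" if "t \<in> T0" for t
    using sir_infected_sign[OF bspec[OF eqy that]] y_pos ts_sigma_in[OF \<open>closed T0\<close> that] by auto
  have "b t * (x t / (x t + y t)) \<le> c t" if "t \<in> T0" and
    hyp: "(\<forall>t\<in>T. c t \<ge> b t) \<or> (\<forall>t\<in>T. x0 / (x0 + y0) * b t \<le> c t \<and> c t \<le> b t)" for t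
  proof -
    have "t \<in> T" "b t \<ge> 0" "x t > 0" "y t > 0"
      using that(1) x_pos y_pos b_nonneg \<open>T0 \<subseteq> T\<close> by auto
    from hyp show ?thesis
    proof
      assume "\<forall>t\<in>T. c t \<ge> b t"
      have "b t * (x t / (x t + y t)) \<le> b t"
        using \<open>b t \<ge> 0\<close> \<open>x t > 0\<close> \<open>y t > 0\<close> by (intro mult_left_le) simp_all
      also have "\<dots> \<le> c t"
        using \<open>\<forall>t\<in>T. c t \<ge> b t\<close> \<open>t \<in> T\<close> by blast
      finally show ?thesis .
    next
      assume bounds: "\<forall>t\<in>T. x0 / (x0 + y0) * b t \<le> c t \<and> c t \<le> b t"
      then have "x t / (x t + y t) \<le> x0 / (x0 + y0)"
        using sir_susceptible_share_nonincreasing[OF T0 x_pos y_pos dx dy eqx eqy] that(1) \<open>T0 \<subseteq> T\<close> init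
        by auto
      then have "b t * (x t / (x t + y t)) \<le> b t * (x0 / (x0 + y0))"
        using \<open>b t \<ge> 0\<close> by (rule mult_left_mono)
      also have "\<dots> \<le> c t"
        using bounds \<open>t \<in> T\<close> by (simp add: mult.commute)
      finally show ?thesis .
    qed
  qed
  then show ?thesis
    using yD_sign \<open>t0 \<in> T0\<close> init by (auto simp: mult.commute)
qed

end
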